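(* Let $n\ge1$ and let $a_1,\dots,a_n$ be real numbers with $\sum_{j=1}^n a_j=1$. Put $C(t)=\sum_{j=1}^n a_j\cos jt$ and $S(t)=\sum_{j=1}^n a_j\sin jt$. Then $$\rho=\min_{t\in\mathbb R}\{C(t):\ S(t)=0\}$$ is negative. *)

theory Defs
  imports Complex_Main
begin

definition Cpoly :: "nat \<Rightarrow> (nat \<Rightarrow> real) \<Rightarrow> real \<Rightarrow> real" where
  "Cpoly n a t = (\<Sum>j=1..n. a j * cos (real j * t))"

definition Spoly :: "nat \<Rightarrow> (nat \<Rightarrow> real) \<Rightarrow> real \<Rightarrow> real" where
  "Spoly n a t = (\<Sum>j=1..n. a j * sin (real j * t))"

end

theory Submission
  imports Defs "HOL-Complex_Analysis.Conformal_Mappings"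
begin

text \<open>On the unit circle, \<open>C(t) + i S(t)\<close> is the polynomial \<open>P(z) = \<Sum> a\<^sub>j z\<^sup>j\<close> evaluated at
  \<open>z = e\<^sup>i\<^sup>t\<close>; here \<open>P(0) = 0\<close> and \<open>P(1) = 1\<close>, so \<open>P\<close> is not constant. Let \<open>w\<close> be the leftmost point of
  the real segment \<open>P(closed disc) \<inter> \<real>\<close>. By the open mapping theorem \<open>P(open disc)\<close> is an
  open neighbourhood of \<open>P(0) = 0\<close>, so \<open>w < 0\<close>; and \<open>w\<close> cannot lie in that open set, so it is
  the image of a point of the unit circle. Conversely every real value of \<open>P\<close> on the circle lies
  in the segment, hence \<open>w\<close> is the constrained minimum of \<open>C\<close>.\<close>

lemma open_real_shift_left:
  fixes w :: "'a :: real_normed_algebra_1"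
  assumes "open U" and "w \<in> U"
  obtains e where "e > 0" and "w - of_real e \<in> U"
proof -
  obtain r where "r > 0" and r: "ball w r \<subseteq> U"
    using assms open_contains_ball by blast
  have "w - of_real (r/2) \<in> ball w r"
    using \<open>r > 0\<close> by (simp add: dist_norm)
  then show ?thesis
    using that[of "r/2"] r \<open>r > 0\<close> by (meson half_gt_zero subsetD)
qed

lemma holomorphic_real_values_min_on_sphere:
  fixes f :: "complex \<Rightarrow> complex"
  assumes holf: "f holomorphic_on S" and "open S" and "connected S"
    and "cball c r \<subseteq> S" and "r > 0"
    and "\<not> f constant_on S" and "Im (f c) = 0"
  obtains z where "dist c z = r" and "Im (f z) = 0" and "Re (f z) < Re (f c)"
    and "\<And>u. u \<in> cball c r \<Longrightarrow> Im (f u) = 0 \<Longrightarrow> Re (f z) \<le> Re (f u)"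
proof -
  define K where "K = f ` cball c r \<inter> {w. Im w = 0}"
  have "continuous_on (cball c r) f"
    using holf assms(4) holomorphic_on_imp_continuous_on holomorphic_on_subset by blast
  then have "compact (f ` cball c r)"
    by (rule compact_continuous_image[OF _ compact_cball])
  moreover have "closed {w::complex. Im w = 0}"
    by (intro closed_Collect_eq continuous_intros)
  ultimately have "compact K"
    unfolding K_def by (rule compact_Int_closed)
  moreover have "f c \<in> K"
    unfolding K_def using \<open>r > 0\<close> \<open>Im (f c) = 0\<close> by auto
  ultimately obtain w where "w \<in> K" and wmin: "\<And>y. y \<in> K \<Longrightarrow> Re w \<le> Re y"
    using continuous_attains_inf[of K Re] continuous_on_Re[OF continuous_on_id] by blast
  have open_image: "open (f ` ball c r)"
    using assms ball_subset_cball by (intro open_mapping_thm[OF holf]) blast+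
  have below: "Re w < Re y" if y_in: "y \<in> f ` ball c r" and "Im y = 0" for y
  proof -
    obtain e where "e > 0" and "y - of_real e \<in> f ` ball c r"
      using open_real_shift_left[OF open_image y_in] by blast
    then have "y - of_real e \<in> K"
      unfolding K_def using \<open>Im y = 0\<close> ball_subset_cball by auto
    then show ?thesis
      using wmin \<open>e > 0\<close> by fastforce
  qed
  from \<open>w \<in> K\<close> obtain z where z: "z \<in> cball c r" "w = f z" and "Im w = 0"
    unfolding K_def by auto
  have "dist c z = r"
    using below[of w] z \<open>Im w = 0\<close> by force
  moreover have "Re w < Re (f c)"
    using below \<open>r > 0\<close> \<open>Im (f c) = 0\<close> by simp
  ultimately show ?thesis
    using that[of z] z \<open>Im w = 0\<close> wmin unfolding K_def by auto
qed

lemma sum_poly_cis: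
  "(\<Sum>j=1..n. complex_of_real (a j) * cis t ^ j) = Complex (Cpoly n a t) (Spoly n a t)"
  unfolding Cpoly_def Spoly_def
  by (simp add: complex_eq_iff Re_sum Im_sum cos_n_Re_cis_pow_n sin_n_Im_cis_pow_n)

theorem lemma1:
  fixes n :: nat and a :: "nat \<Rightarrow> real"
  assumes "n \<ge> 1" and "(\<Sum>j=1..n. a j) = 1"
  shows "\<exists>t0. Spoly n a t0 = 0 \<and> (\<forall>t. Spoly n a t = 0 \<longrightarrow> Cpoly n a t0 \<le> Cpoly n a t)
              \<and> Cpoly n a t0 < 0"
proof -
  define P where "P z = (\<Sum>j=1..n. complex_of_real (a j) * z ^ j)" for z
  have "P 0 = 0" and "P 1 = 1"
    unfolding P_def using assms(2) by (simp_all flip: of_real_sum)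
  then have "\<not> P constant_on UNIV"
    unfolding constant_on_def by (metis UNIV_I zero_neq_one)
  moreover have "P holomorphic_on UNIV"
    unfolding P_def by (intro holomorphic_intros)
  ultimately obtain z where "cmod z = 1" and "Im (P z) = 0" and "Re (P z) < 0"
    and zmin: "\<And>u. cmod u \<le> 1 \<Longrightarrow> Im (P u) = 0 \<Longrightarrow> Re (P z) \<le> Re (P u)"
    using holomorphic_real_values_min_on_sphere[of P UNIV 0 1] \<open>P 0 = 0\<close> by auto
  then have "z \<noteq> 0"
    by auto
  define t0 where "t0 = Arg z"
  have "cis t0 = z"
    unfolding t0_def using cis_Arg[OF \<open>z \<noteq> 0\<close>] \<open>cmod z = 1\<close> by (simp add: sgn_div_norm)
  have P_cis: "P (cis t) = Complex (Cpoly n a t) (Spoly n a t)" for t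
    unfolding P_def by (rule sum_poly_cis)
  show ?thesis
  proof (intro exI conjI allI impI)
    show "Spoly n a t0 = 0" and "Cpoly n a t0 < 0"
      using \<open>Im (P z) = 0\<close> \<open>Re (P z) < 0\<close> P_cis[of t0] \<open>cis t0 = z\<close> by auto
    show "Cpoly n a t0 \<le> Cpoly n a t" if "Spoly n a t = 0" for t
      using zmin[of "cis t"] that P_cis[of t] P_cis[of t0] \<open>cis t0 = z\<close> by simp
  qed
qed

end
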